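(* For every integer $m\ge2$ and every $\alpha\in[0,1]$, the randomized rule \textsc{SmartDictatorship} (with parameter $\alpha$) has distortion at most $2+\alpha-2/m$ on $\alpha$-decisive metric spaces.
   Context: An election: voters $V=\{1,\dots,n\}$, a fixed finite set $C$ of $m$ candidates, a profile of linear orders over $C$; $\mathrm{top}(i)$ is $i$'s first choice; $\mathrm{plu}(a)=|\{i:\mathrm{top}(i)=a\}|$. A distance function $d$ on $V\cup C$ is nonnegative, symmetric and satisfies the triangle inequality (co-location allowed); consistent with the profile if $d(i,c)\le d(i,c')$ whenever $i$ ranks $c$ above $c'$; $\alpha$-decisive if $d(i,\mathrm{top}(i))\le\alpha\,d(i,c)$ for all $i$ and $c\ne\mathrm{top}(i)$. $\mathrm{SC}(c)=\sum_i d(i,c)$. The distortion of a randomized rule $f$ on $\alpha$-decisive spaces is $\sup_\sigma\sup_d \mathbb{E}[\mathrm{SC}(f(\sigma))]/\min_c\mathrm{SC}(c)$ over $\alpha$-decisive consistent $d$. \textsc{SmartDictatorship}: if some candidate $a$ has $\mathrm{plu}(a)\ge(1+\alpha)n/2$, it chooses one such candidate (arbitrarily) with probability $1$; otherwise it chooses each candidate $a$ with probability proportional to $\mathrm{plu}(a)/\bigl(n-\frac{2}{1+\alpha}\mathrm{plu}(a)\bigr)$. *)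

theory Defs
  imports Complex_Main
begin

text \<open>A profile is P :: 'v => ('c * 'c) set where each P i is a linear
order on the candidates; (c, c') in P i means voter i ranks c at least as high as c'.
Points of the (pseudo)metric space are elements of 'v + 'c.\<close>

definition top_choice :: "('c \<times> 'c) set \<Rightarrow> 'c" where
  "top_choice R = (THE c. \<forall>c'. (c, c') \<in> R)"

definition plu :: "('v::finite \<Rightarrow> ('c \<times> 'c) set) \<Rightarrow> 'c \<Rightarrow> nat" where
  "plu P a = card {i. top_choice (P i) = a}"

definition is_distance :: "('a \<Rightarrow> 'a \<Rightarrow> real) \<Rightarrow> bool" where
  "is_distance d \<longleftrightarrow>
     (\<forall>x y. 0 \<le> d x y) \<and> (\<forall>x. d x x = 0) \<and> (\<forall>x y. d x y = d y x) \<and>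
     (\<forall>x y z. d x z \<le> d x y + d y z)"

definition consistent ::
  "('v \<Rightarrow> ('c \<times> 'c) set) \<Rightarrow> ('v + 'c \<Rightarrow> 'v + 'c \<Rightarrow> real) \<Rightarrow> bool" where
  "consistent P d \<longleftrightarrow>
     (\<forall>i c c'. (c, c') \<in> P i \<and> c \<noteq> c' \<longrightarrow> d (Inl i) (Inr c) \<le> d (Inl i) (Inr c'))"

definition decisive ::
  "real \<Rightarrow> ('v \<Rightarrow> ('c \<times> 'c) set) \<Rightarrow> ('v + 'c \<Rightarrow> 'v + 'c \<Rightarrow> real) \<Rightarrow> bool" where
  "decisive \<alpha> P d \<longleftrightarrow>
     (\<forall>i c. c \<noteq> top_choice (P i) \<longrightarrow>
        d (Inl i) (Inr (top_choice (P i))) \<le> \<alpha> * d (Inl i) (Inr c))"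

definition SC :: "('v::finite + 'c \<Rightarrow> 'v + 'c \<Rightarrow> real) \<Rightarrow> 'c \<Rightarrow> real" where
  "SC d c = (\<Sum>i\<in>(UNIV::'v set). d (Inl i) (Inr c))"

definition sd_weight :: "real \<Rightarrow> ('v::finite \<Rightarrow> ('c \<times> 'c) set) \<Rightarrow> 'c \<Rightarrow> real" where
  "sd_weight \<alpha> P a =
     real (plu P a) / (real (card (UNIV::'v set)) - 2 / (1 + \<alpha>) * real (plu P a))"

text \<open>The set of possible output lotteries (probability functions on candidates) of
SmartDictatorship; in the dictatorial case the choice among qualifying candidates is
arbitrary, so every such choice is a possible output.\<close>
definition smart_dictatorship ::
  "real \<Rightarrow> ('v::finite \<Rightarrow> ('c::finite \<times> 'c) set) \<Rightarrow> ('c \<Rightarrow> real) set" where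
  "smart_dictatorship \<alpha> P =
     (if \<exists>a. real (plu P a) \<ge> (1 + \<alpha>) * real (card (UNIV::'v set)) / 2
      then {(\<lambda>x. if x = a then 1 else 0) | a. real (plu P a) \<ge> (1 + \<alpha>) * real (card (UNIV::'v set)) / 2}
      else {(\<lambda>a. sd_weight \<alpha> P a / (\<Sum>b\<in>UNIV. sd_weight \<alpha> P b))})"

end

theory Submission
  imports Defs
begin

text \<open>Fix a candidate \<open>c\<close>, and let \<open>a \<noteq> c\<close> be ranked first by \<open>K\<close> voters, who are at
total distance \<open>S\<^sub>a\<close> from \<open>c\<close>. For these voters decisiveness gives
\<open>d(i,a) \<le> \<alpha> d(i,c)\<close>, hence also \<open>d(a,c) \<le> (1+\<alpha>) d(i,c)\<close>; for all other voters
\<open>d(i,a) \<le> d(i,c) + d(a,c)\<close>. Together,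
\<open>K SC(a) \<le> K SC(c) + ((1+\<alpha>) n - 2K) S\<^sub>a\<close>.
If \<open>2K \<ge> (1+\<alpha>) n\<close> this says \<open>SC(a) \<le> SC(c)\<close>. Otherwise the weight of \<open>a\<close> is
\<open>w\<^sub>a = (1+\<alpha>) K / ((1+\<alpha>) n - 2K)\<close>, so \<open>w\<^sub>a SC(a) \<le> w\<^sub>a SC(c) + (1+\<alpha>) S\<^sub>a\<close>;
as the \<open>S\<^sub>a\<close> sum to \<open>SC(c)\<close>, the expected cost is at most \<open>(1 + (1+\<alpha>)/W) SC(c)\<close>
with \<open>W = \<Sum> w\<^sub>a\<close>. Finally \<open>x \<mapsto> x / (n - 2x/(1+\<alpha>))\<close> is convex and the \<open>K\<close> sum
to \<open>n\<close>, so Jensen's inequality gives \<open>(1+\<alpha>)/W \<le> 1 + \<alpha> - 2/m\<close>.\<close>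

lemma ratio_above_tangent:
  fixes b n x x0 :: real
  assumes "0 \<le> b" "0 \<le> n" "0 < n - b * x" "0 < n - b * x0"
  shows "x0 / (n - b * x0) + n * (x - x0) / (n - b * x0)^2 \<le> x / (n - b * x)"
proof -
  define y y0 where "y = n - b * x" and "y0 = n - b * x0"
  have "0 < y" "0 < y0" using assms(3,4) by (simp_all add: y_def y0_def)
  have "x * y0^2 - (x0 * y0 + n * (x - x0)) * y = n * b * (x - x0)^2"
    unfolding y_def y0_def by (simp add: power2_eq_square algebra_simps)
  moreover have "0 \<le> n * b * (x - x0)^2" using assms(1,2) by simp
  ultimately have "(x0 * y0 + n * (x - x0)) * y \<le> x * y0^2" by linarith
  have "x0 / y0 + n * (x - x0) / y0^2 = (x0 * y0 + n * (x - x0)) * y / (y * y0^2)"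
    using \<open>0 < y\<close> \<open>0 < y0\<close> by (simp add: field_simps power2_eq_square)
  also have "\<dots> \<le> x * y0^2 / (y * y0^2)"
    using \<open>0 < y\<close> \<open>0 < y0\<close> \<open>(x0 * y0 + n * (x - x0)) * y \<le> x * y0^2\<close>
    by (intro divide_right_mono) auto
  also have "\<dots> = x / y" using \<open>0 < y0\<close> by simp
  finally show ?thesis unfolding y_def y0_def .
qed

lemma card_div_le_sum_ratio:
  fixes K :: "'a \<Rightarrow> real" and b n :: real
  assumes "finite A" "A \<noteq> {}" "0 \<le> b"
    and nonneg: "\<And>a. a \<in> A \<Longrightarrow> 0 \<le> K a"
    and bounded: "\<And>a. a \<in> A \<Longrightarrow> b * K a < n"
    and total: "(\<Sum>a\<in>A. K a) = n"
  shows "b < card A" and "card A / (card A - b) \<le> (\<Sum>a\<in>A. K a / (n - b * K a))"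
proof -
  define m where "m = real (card A)"
  have "0 < m" using assms(1,2) by (simp add: m_def card_gt_0_iff)
  obtain a where "a \<in> A" using assms(2) by blast
  then have "0 < n" using nonneg bounded assms(3) by (meson mult_nonneg_nonneg le_less_trans)
  have "b * n = (\<Sum>a\<in>A. b * K a)" by (simp add: sum_distrib_left flip: total)
  also have "\<dots> < (\<Sum>a\<in>A. n)" using assms(1,2) bounded by (intro sum_strict_mono) auto
  also have "\<dots> = m * n" by (simp add: m_def)
  finally have "b < m" using \<open>0 < n\<close> by simp
  then show "b < card A" by (simp add: m_def)
  txt \<open>Jensen: the tangent of the convex \<open>x \<mapsto> x / (n - b x)\<close> at the mean \<open>n / m\<close>.\<close>
  define x0 where "x0 = n / m"
  have "n - b * x0 = n * (m - b) / m" using \<open>0 < m\<close> by (simp add: x0_def field_simps)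
  then have "0 < n - b * x0" using \<open>0 < n\<close> \<open>0 < m\<close> \<open>b < m\<close> by simp
  have "x0 / (n - b * x0) = 1 / (m - b)"
    using \<open>0 < n\<close> \<open>0 < m\<close> \<open>b < m\<close>
    unfolding \<open>n - b * x0 = n * (m - b) / m\<close> by (simp add: x0_def)
  then have "m / (m - b) = m * (x0 / (n - b * x0))" by simp
  also have "\<dots> = (\<Sum>a\<in>A. x0 / (n - b * x0)) + n * (\<Sum>a\<in>A. K a - x0) / (n - b * x0)^2"
    using \<open>0 < m\<close> by (simp add: x0_def m_def sum_subtractf total)
  also have "\<dots> = (\<Sum>a\<in>A. x0 / (n - b * x0) + n * (K a - x0) / (n - b * x0)^2)"
    by (simp add: sum.distrib sum_divide_distrib sum_distrib_left)
  also have "\<dots> \<le> (\<Sum>a\<in>A. K a / (n - b * K a))"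
    using bounded \<open>0 < n - b * x0\<close> \<open>0 < n\<close> assms(3)
    by (intro sum_mono ratio_above_tangent) auto
  finally show "card A / (card A - b) \<le> (\<Sum>a\<in>A. K a / (n - b * K a))" by (simp add: m_def)
qed

definition supporters :: "('v \<Rightarrow> ('c \<times> 'c) set) \<Rightarrow> 'c \<Rightarrow> 'v set" where
  "supporters P a = {i. top_choice (P i) = a}"

lemma plu_eq_card_supporters: "plu P a = card (supporters P a)"
  by (simp add: plu_def supporters_def)

lemma sum_supporters:
  fixes P :: "'v::finite \<Rightarrow> ('c::finite \<times> 'c) set"
  shows "(\<Sum>a\<in>UNIV. \<Sum>i\<in>supporters P a. f i) = (\<Sum>i\<in>UNIV. f i)"
  using sum.group [of UNIV UNIV "\<lambda>i. top_choice (P i)" f] by (simp add: supporters_def)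

lemma sum_plu:
  fixes P :: "'v::finite \<Rightarrow> ('c::finite \<times> 'c) set"
  shows "(\<Sum>a\<in>UNIV. real (plu P a)) = real (card (UNIV::'v set))"
  using sum_supporters [where f = "\<lambda>_. 1::real" and P = P] by (simp add: plu_eq_card_supporters)

lemma plu_le_card:
  fixes P :: "'v::finite \<Rightarrow> ('c \<times> 'c) set"
  shows "plu P a \<le> card (UNIV::'v set)"
  by (simp add: plu_eq_card_supporters card_mono)

lemma sd_weight_eq:
  fixes P :: "'v::finite \<Rightarrow> ('c \<times> 'c) set"
  assumes "\<alpha> \<noteq> -1"
  shows "sd_weight \<alpha> P a =
    (1 + \<alpha>) * real (plu P a) / ((1 + \<alpha>) * real (card (UNIV::'v set)) - 2 * real (plu P a))"
proof -
  have "real (card (UNIV::'v set)) - 2 / (1 + \<alpha>) * real (plu P a) =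
      ((1 + \<alpha>) * real (card (UNIV::'v set)) - 2 * real (plu P a)) / (1 + \<alpha>)"
    using assms by (simp add: field_simps)
  then show ?thesis by (simp add: sd_weight_def)
qed

locale decisive_space =
  fixes \<alpha> :: real
    and P :: "'v::finite \<Rightarrow> ('c::finite \<times> 'c) set"
    and d :: "'v + 'c \<Rightarrow> 'v + 'c \<Rightarrow> real"
  assumes alpha_nonneg: "0 \<le> \<alpha>"
    and distance: "is_distance d"
    and decisive: "decisive \<alpha> P d"
begin

lemma d_nonneg: "0 \<le> d x y"
  and d_sym: "d x y = d y x"
  and d_triangle: "d x z \<le> d x y + d y z"
  using distance by (auto simp: is_distance_def)

lemma d_supporter_le:
  assumes "i \<in> supporters P a" "a \<noteq> c"
  shows "d (Inl i) (Inr a) \<le> \<alpha> * d (Inl i) (Inr c)"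
  using decisive assms by (auto simp: decisive_def supporters_def)

definition supporters_cost :: "'c \<Rightarrow> 'c \<Rightarrow> real" where
  "supporters_cost c a = (\<Sum>i\<in>supporters P a. d (Inl i) (Inr c))"

lemma supporters_cost_nonneg: "0 \<le> supporters_cost c a"
  by (simp add: supporters_cost_def sum_nonneg d_nonneg)

lemma sum_supporters_cost: "(\<Sum>a\<in>UNIV. supporters_cost c a) = SC d c"
  by (simp add: supporters_cost_def SC_def sum_supporters)

lemma SC_nonneg: "0 \<le> SC d c"
  by (simp add: SC_def sum_nonneg d_nonneg)

lemma SC_le_supporters_cost:
  assumes "a \<noteq> c"
  shows "SC d a \<le> SC d c + (real (card (UNIV::'v set)) - real (plu P a)) * d (Inr a) (Inr c)
    - (1 - \<alpha>) * supporters_cost c a"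
proof -
  let ?V = "supporters P a"
  have card_others: "real (card (UNIV - ?V)) = real (card (UNIV::'v set)) - real (plu P a)"
    by (simp add: card_Diff_subset plu_eq_card_supporters card_mono of_nat_diff)
  have "SC d a = (\<Sum>i\<in>UNIV - ?V. d (Inl i) (Inr a)) + (\<Sum>i\<in>?V. d (Inl i) (Inr a))"
    unfolding SC_def by (rule sum.subset_diff) auto
  also have "\<dots> \<le> (\<Sum>i\<in>UNIV - ?V. d (Inl i) (Inr c) + d (Inr a) (Inr c))
      + (\<Sum>i\<in>?V. d (Inl i) (Inr c) - (1 - \<alpha>) * d (Inl i) (Inr c))"
  proof (intro add_mono sum_mono)
    show "d (Inl i) (Inr a) \<le> d (Inl i) (Inr c) + d (Inr a) (Inr c)" for i
      using d_triangle [where x = "Inl i" and y = "Inr c" and z = "Inr a"] d_sym [of "Inr c"]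
      by simp
    show "d (Inl i) (Inr a) \<le> d (Inl i) (Inr c) - (1 - \<alpha>) * d (Inl i) (Inr c)" if "i \<in> ?V" for i
      using d_supporter_le [OF that] assms by (simp add: algebra_simps)
  qed
  also have "\<dots> = SC d c + (real (card (UNIV::'v set)) - real (plu P a)) * d (Inr a) (Inr c)
      - (1 - \<alpha>) * supporters_cost c a"
    using sum.subset_diff [of ?V UNIV "\<lambda>i. d (Inl i) (Inr c)"]
    by (simp add: SC_def supporters_cost_def sum.distrib sum_subtractf card_others
        flip: sum_distrib_left)
  finally show ?thesis .
qed

lemma plu_mult_d_le_supporters_cost:
  assumes "a \<noteq> c"
  shows "real (plu P a) * d (Inr a) (Inr c) \<le> (1 + \<alpha>) * supporters_cost c a"
proof -
  have "real (plu P a) * d (Inr a) (Inr c) = (\<Sum>i\<in>supporters P a. d (Inr a) (Inr c))"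
    by (simp add: plu_eq_card_supporters)
  also have "\<dots> \<le> (\<Sum>i\<in>supporters P a. (1 + \<alpha>) * d (Inl i) (Inr c))"
  proof (rule sum_mono)
    fix i assume "i \<in> supporters P a"
    have "d (Inr a) (Inr c) \<le> d (Inl i) (Inr a) + d (Inl i) (Inr c)"
      using d_triangle [where x = "Inr a" and y = "Inl i" and z = "Inr c"] d_sym [of "Inr a"]
      by simp
    with d_supporter_le [OF \<open>i \<in> supporters P a\<close> assms]
    show "d (Inr a) (Inr c) \<le> (1 + \<alpha>) * d (Inl i) (Inr c)" by (simp add: algebra_simps)
  qed
  also have "\<dots> = (1 + \<alpha>) * supporters_cost c a"
    by (simp add: supporters_cost_def sum_distrib_left)
  finally show ?thesis .
qed

lemma plu_mult_SC_le:
  assumes "a \<noteq> c"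
  shows "real (plu P a) * SC d a \<le> real (plu P a) * SC d c
    + ((1 + \<alpha>) * real (card (UNIV::'v set)) - 2 * real (plu P a)) * supporters_cost c a"
proof -
  let ?K = "real (plu P a)" and ?n = "real (card (UNIV::'v set))"
  have "?K * SC d a
      \<le> ?K * (SC d c + (?n - ?K) * d (Inr a) (Inr c) - (1 - \<alpha>) * supporters_cost c a)"
    using SC_le_supporters_cost [OF assms] by (intro mult_left_mono) auto
  moreover have "(?n - ?K) * (?K * d (Inr a) (Inr c))
      \<le> (?n - ?K) * ((1 + \<alpha>) * supporters_cost c a)"
    using plu_mult_d_le_supporters_cost [OF assms] plu_le_card [of P a] by (intro mult_left_mono) auto
  ultimately show ?thesis by (simp add: algebra_simps)
qed

lemma SC_le_if_majority:
  assumes "(1 + \<alpha>) * real (card (UNIV::'v set)) / 2 \<le> real (plu P a)"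
  shows "SC d a \<le> SC d c"
proof (cases "a = c")
  case False
  have "0 < (1 + \<alpha>) * real (card (UNIV::'v set))"
    using alpha_nonneg by (simp add: card_gt_0_iff)
  then have "0 < real (plu P a)" using assms by linarith
  have "((1 + \<alpha>) * real (card (UNIV::'v set)) - 2 * real (plu P a)) * supporters_cost c a \<le> 0"
    using assms supporters_cost_nonneg by (intro mult_nonpos_nonneg) auto
  then have "real (plu P a) * SC d a \<le> real (plu P a) * SC d c"
    using plu_mult_SC_le [OF False] by linarith
  then show ?thesis using \<open>0 < real (plu P a)\<close> by simp
qed simp

lemma sd_weight_mult_SC_le:
  assumes "real (plu P a) < (1 + \<alpha>) * real (card (UNIV::'v set)) / 2"
  shows "sd_weight \<alpha> P a * SC d a \<le> sd_weight \<alpha> P a * SC d c + (1 + \<alpha>) * supporters_cost c a"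
proof (cases "a = c")
  case True
  then show ?thesis using alpha_nonneg supporters_cost_nonneg by simp
next
  case False
  define D where "D = (1 + \<alpha>) * real (card (UNIV::'v set)) - 2 * real (plu P a)"
  have "0 < D" using assms by (simp add: D_def)
  have w: "sd_weight \<alpha> P a = (1 + \<alpha>) / D * real (plu P a)"
    using alpha_nonneg by (simp add: sd_weight_eq D_def)
  have "(1 + \<alpha>) / D * (real (plu P a) * SC d a)
      \<le> (1 + \<alpha>) / D * (real (plu P a) * SC d c + D * supporters_cost c a)"
    using plu_mult_SC_le [OF False] \<open>0 < D\<close> alpha_nonneg
    by (intro mult_left_mono) (auto simp: D_def)
  then show ?thesis using \<open>0 < D\<close> by (simp add: w field_simps)
qed

lemma sum_sd_weight_ge:
  assumes "\<And>a. real (plu P a) < (1 + \<alpha>) * real (card (UNIV::'v set)) / 2"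
  shows "2 / (1 + \<alpha>) < real (card (UNIV::'c set))"
    and "real (card (UNIV::'c set)) / (real (card (UNIV::'c set)) - 2 / (1 + \<alpha>))
      \<le> (\<Sum>a\<in>UNIV. sd_weight \<alpha> P a)"
proof -
  have "2 / (1 + \<alpha>) * real (plu P a) < real (card (UNIV::'v set))" for a
    using assms [of a] alpha_nonneg by (simp add: field_simps)
  note ratio = card_div_le_sum_ratio
    [of UNIV "2 / (1 + \<alpha>)" "\<lambda>a. real (plu P a)", OF _ _ _ _ this sum_plu]
  show "2 / (1 + \<alpha>) < real (card (UNIV::'c set))"
    using ratio(1) alpha_nonneg by simp
  show "real (card (UNIV::'c set)) / (real (card (UNIV::'c set)) - 2 / (1 + \<alpha>))
      \<le> (\<Sum>a\<in>UNIV. sd_weight \<alpha> P a)"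
    using ratio(2) alpha_nonneg by (simp add: sd_weight_def)
qed

lemma lottery_cost_le:
  assumes "\<And>a. real (plu P a) < (1 + \<alpha>) * real (card (UNIV::'v set)) / 2"
  shows "(\<Sum>a\<in>UNIV. sd_weight \<alpha> P a / (\<Sum>b\<in>UNIV. sd_weight \<alpha> P b) * SC d a)
    \<le> (2 + \<alpha> - 2 / real (card (UNIV::'c set))) * SC d c"
proof -
  define W where "W = (\<Sum>b\<in>UNIV. sd_weight \<alpha> P b)"
  define m where "m = real (card (UNIV::'c set))"
  have "2 / (1 + \<alpha>) < m" and W_ge: "m / (m - 2 / (1 + \<alpha>)) \<le> W"
    using sum_sd_weight_ge [OF assms] by (simp_all add: W_def m_def)
  have "0 < m" by (simp add: m_def card_gt_0_iff)
  then have "0 < m / (m - 2 / (1 + \<alpha>))" using \<open>2 / (1 + \<alpha>) < m\<close> by simp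
  with W_ge have "0 < W" by linarith
  have "(1 + \<alpha>) / W \<le> (1 + \<alpha>) / (m / (m - 2 / (1 + \<alpha>)))"
    using W_ge \<open>0 < W\<close> \<open>0 < m / (m - 2 / (1 + \<alpha>))\<close> alpha_nonneg
    by (intro divide_left_mono mult_pos_pos) auto
  also have "\<dots> = 1 + \<alpha> - 2 / m"
    using \<open>0 < m\<close> \<open>2 / (1 + \<alpha>) < m\<close> alpha_nonneg by (simp add: field_simps)
  finally have inverse_W_le: "(1 + \<alpha>) / W \<le> 1 + \<alpha> - 2 / m" .
  have "(\<Sum>a\<in>UNIV. sd_weight \<alpha> P a * SC d a)
      \<le> (\<Sum>a\<in>UNIV. sd_weight \<alpha> P a * SC d c + (1 + \<alpha>) * supporters_cost c a)"
    using assms by (intro sum_mono sd_weight_mult_SC_le)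
  also have "\<dots> = (W + (1 + \<alpha>)) * SC d c"
    by (simp add: W_def sum.distrib algebra_simps sum_supporters_cost
        flip: sum_distrib_left sum_distrib_right)
  finally have weighted_le:
    "(\<Sum>a\<in>UNIV. sd_weight \<alpha> P a * SC d a) \<le> (W + (1 + \<alpha>)) * SC d c" .
  have "(\<Sum>a\<in>UNIV. sd_weight \<alpha> P a / W * SC d a)
      = (\<Sum>a\<in>UNIV. sd_weight \<alpha> P a * SC d a) / W"
    by (simp add: sum_divide_distrib)
  also have "\<dots> \<le> (W + (1 + \<alpha>)) * SC d c / W"
    using weighted_le \<open>0 < W\<close> by (simp add: divide_right_mono)
  also have "\<dots> = (1 + (1 + \<alpha>) / W) * SC d c"
    using \<open>0 < W\<close> by (simp add: field_simps)
  also have "\<dots> \<le> (2 + \<alpha> - 2 / m) * SC d c"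
    using inverse_W_le SC_nonneg by (intro mult_right_mono) auto
  finally show ?thesis by (simp add: W_def m_def)
qed

end

theorem theorem3:
  fixes \<alpha> :: real
    and P :: "'v::finite \<Rightarrow> ('c::finite \<times> 'c) set"
    and d :: "'v + 'c \<Rightarrow> 'v + 'c \<Rightarrow> real"
    and p :: "'c \<Rightarrow> real"
    and c :: 'c
  assumes "card (UNIV::'c set) \<ge> 2"
    and "0 \<le> \<alpha>" and "\<alpha> \<le> 1"
    and "\<forall>i. linear_order (P i)"
    and "is_distance d"
    and "consistent P d"
    and "decisive \<alpha> P d"
    and "p \<in> smart_dictatorship \<alpha> P"
  shows "(\<Sum>a\<in>UNIV. p a * SC d a) \<le> (2 + \<alpha> - 2 / real (card (UNIV::'c set))) * SC d c"
proof -
  interpret decisive_space \<alpha> P d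
    using assms(2,5,7) by unfold_locales
  show ?thesis
  proof (cases "\<exists>a. real (plu P a) \<ge> (1 + \<alpha>) * real (card (UNIV::'v set)) / 2")
    case True
    then obtain a where majority: "(1 + \<alpha>) * real (card (UNIV::'v set)) / 2 \<le> real (plu P a)"
      and p: "p = (\<lambda>x. if x = a then 1 else 0)"
      using assms(8) by (auto simp: smart_dictatorship_def)
    have "2 / real (card (UNIV::'c set)) \<le> 1" using assms(1) by simp
    then have "1 \<le> 2 + \<alpha> - 2 / real (card (UNIV::'c set))" using assms(2) by linarith
    from mult_right_mono [OF this SC_nonneg]
    have "SC d c \<le> (2 + \<alpha> - 2 / real (card (UNIV::'c set))) * SC d c" by simp
    moreover have "(\<Sum>x\<in>UNIV. p x * SC d x) = SC d a" by (simp add: p flip: of_bool_def)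
    ultimately show ?thesis using SC_le_if_majority [OF majority, of c] by simp
  next
    case False
    then have lottery: "p = (\<lambda>a. sd_weight \<alpha> P a / (\<Sum>b\<in>UNIV. sd_weight \<alpha> P b))"
      using assms(8) by (simp add: smart_dictatorship_def)
    have "real (plu P a) < (1 + \<alpha>) * real (card (UNIV::'v set)) / 2" for a
      using False by (simp add: not_le)
    from lottery_cost_le [OF this] show ?thesis by (simp add: lottery)
  qed
qed

end
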